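(* For every $z_0,z_1\in\ell'$ and every $k\in\mathbb{Z}\setminus\{0\}$: (1) there exists $C=C(k)>0$ such that $\mathcal M(u)\ge C$ for all $u\in\mathcal H^k_{z_0z_1}$; (2) $\mathcal M$ is weakly lower semicontinuous on $\mathcal H^k_{z_0z_1}$ (with respect to the weak topology of $H^1$); (3) $\mathcal M$ is coercive on $\mathcal H^k_{z_0z_1}$.
   Context: Fix $L,h,\beta>0$, $V_\beta(z)=-\frac1{|z|}-\frac{\beta}{|z|^2}$, $\ell=\{y=-L\}$, $\mathcal P=\{y>-L\}$. Winding number: for $u:[a,b]\to\overline{\mathcal P}$ with $u(a),u(b)\in\ell$, $u(s)\in\mathcal P\setminus\{0\}$ on $(a,b)$, $\operatorname{Ind}(u)$ is the winding number around $0$ of the closed curve formed by $u$ followed by the oriented segment from $u(b)$ to $u(a)$. Fix a solution $\hat{\mathcal Z}$ of $\ddot z=-\nabla V_\beta(z)$ at energy $h$ ($\frac12|\dot z|^2+V_\beta(z)=h$) which meets $\ell$ at times $t_0<t_1$ at the points $(\hat x_0,-L)$, $(\hat x_1,-L)$, lies in $\mathcal P$ for $t\in(t_0,t_1)$, has winding number $1$ on $[t_0,t_1]$, and such that the angle between $\dot{\hat{\mathcal Z}}(t_0)$ and $(1,0)$ is $<\pi/2$ and the angle between $(-1,0)$ and $\dot{\hat{\mathcal Z}}(t_1)$ is $>\pi/2$. Let $\ell'\subset\ell$ be the segment with endpoints $(\hat x_0,-L),(\hat x_1,-L)$ and $D$ the compact region bounded by the arc $\hat{\mathcal Z}([t_0,t_1])$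 and $\ell'$. For $z_0,z_1\in\ell'$, $k\ne0$: $\hat{\mathcal H}^k_{z_0z_1}=\{u\in H^1([0,1],D): u(0)=z_0,u(1)=z_1, u(s)\ne0\ \forall s, \operatorname{Ind}(u)=k\}$, $Coll_{z_0z_1}=\{u\in H^1([0,1],D):u(0)=z_0,u(1)=z_1,\exists s: u(s)=0\}$, and $\mathcal H^k_{z_0z_1}=\hat{\mathcal H}^k_{z_0z_1}\sqcup Coll_{z_0z_1}$. The Maupertuis functional is $\mathcal M(u)=\frac12\int_0^1|\dot u(s)|^2ds\int_0^1(h-V_\beta(u(s)))ds\in\mathbb{R}\cup\{\infty\}$. *)

theory Defs
  imports "HOL-Complex_Analysis.Complex_Analysis"
begin

text \<open>The plane is identified with the complex numbers: z = x + i y.\<close>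

definition Vb :: "real \<Rightarrow> complex \<Rightarrow> real" where
  "Vb \<beta> z = - 1 / cmod z - \<beta> / (cmod z)^2"

text \<open>Gradient of Vb (w.r.t. the real coordinates of z):
  grad(-1/|z|) = z/|z|^3, grad(-beta/|z|^2) = 2 beta z/|z|^4.\<close>
definition gradVb :: "real \<Rightarrow> complex \<Rightarrow> complex" where
  "gradVb \<beta> z = z / of_real ((cmod z)^3) + of_real (2 * \<beta>) * z / of_real ((cmod z)^4)"

definition vangle :: "complex \<Rightarrow> complex \<Rightarrow> real" where
  "vangle v w = arccos ((v \<bullet> w) / (norm v * norm w))"

definition Ind :: "(real \<Rightarrow> complex) \<Rightarrow> complex" where
  "Ind u = winding_number (u +++ linepath (u 1) (u 0)) 0"

text \<open>The closed curve: the arc of the orbit on [t0,t1] (rescaled to [0,1]) followed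
  by the segment of the line back to its start; D is the compact region bounded by it.\<close>
definition orbit_loop :: "(real \<Rightarrow> complex) \<Rightarrow> real \<Rightarrow> real \<Rightarrow> real \<Rightarrow> complex" where
  "orbit_loop Z t0 t1 = (\<lambda>s. Z (t0 + s * (t1 - t0))) +++ linepath (Z t1) (Z t0)"

definition regionD :: "(real \<Rightarrow> complex) \<Rightarrow> real \<Rightarrow> real \<Rightarrow> complex set" where
  "regionD Z t0 t1 = path_image (orbit_loop Z t0 t1) \<union> inside (path_image (orbit_loop Z t0 t1))"

text \<open>H^1([0,1],R^2): u is the integral of an L^2 function g (its weak derivative).\<close>
definition weak_deriv :: "(real \<Rightarrow> complex) \<Rightarrow> (real \<Rightarrow> complex) \<Rightarrow> bool" where
  "weak_deriv u g \<longleftrightarrow> g absolutely_integrable_on {0..1} \<and>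
     (\<lambda>s. (norm (g s))^2) integrable_on {0..1} \<and>
     (\<forall>t\<in>{0..1}. u t = u 0 + integral {0..t} g)"

definition H1 :: "(real \<Rightarrow> complex) \<Rightarrow> bool" where
  "H1 u \<longleftrightarrow> (\<exists>g. weak_deriv u g)"

definition h1d :: "(real \<Rightarrow> complex) \<Rightarrow> real \<Rightarrow> complex" where
  "h1d u = (SOME g. weak_deriv u g)"

definition H1_inner :: "(real \<Rightarrow> complex) \<Rightarrow> (real \<Rightarrow> complex) \<Rightarrow> real" where
  "H1_inner u v = integral {0..1} (\<lambda>s. u s \<bullet> v s) + integral {0..1} (\<lambda>s. h1d u s \<bullet> h1d v s)"

definition H1_norm :: "(real \<Rightarrow> complex) \<Rightarrow> real" where
  "H1_norm u = sqrt (H1_inner u u)"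

text \<open>Weak convergence in the Hilbert space H^1 (tested against the inner product
  with every element of H^1, cf. Riesz representation).\<close>
definition weak_conv_H1 :: "(nat \<Rightarrow> real \<Rightarrow> complex) \<Rightarrow> (real \<Rightarrow> complex) \<Rightarrow> bool" where
  "weak_conv_H1 us u \<longleftrightarrow> H1 u \<and> (\<forall>n. H1 (us n)) \<and>
     (\<forall>v. H1 v \<longrightarrow> (\<lambda>n. H1_inner (us n) v) \<longlonglongrightarrow> H1_inner u v)"

definition Hhat :: "complex set \<Rightarrow> complex \<Rightarrow> complex \<Rightarrow> int \<Rightarrow> (real \<Rightarrow> complex) set" where
  "Hhat D z0 z1 k = {u. H1 u \<and> (\<forall>s\<in>{0..1}. u s \<in> D) \<and> u 0 = z0 \<and> u 1 = z1 \<and>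
      (\<forall>s\<in>{0..1}. u s \<noteq> 0) \<and> Ind u = of_int k}"

definition Coll :: "complex set \<Rightarrow> complex \<Rightarrow> complex \<Rightarrow> (real \<Rightarrow> complex) set" where
  "Coll D z0 z1 = {u. H1 u \<and> (\<forall>s\<in>{0..1}. u s \<in> D) \<and> u 0 = z0 \<and> u 1 = z1 \<and>
      (\<exists>s\<in>{0..1}. u s = 0)}"

definition Hk :: "complex set \<Rightarrow> complex \<Rightarrow> complex \<Rightarrow> int \<Rightarrow> (real \<Rightarrow> complex) set" where
  "Hk D z0 z1 k = Hhat D z0 z1 k \<union> Coll D z0 z1"

text \<open>Maupertuis functional, valued in [0,\<infinity>]; h - V is +\<infinity> at the origin.\<close>
definition Mfun :: "real \<Rightarrow> real \<Rightarrow> (real \<Rightarrow> complex) \<Rightarrow> ennreal" where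
  "Mfun h \<beta> u = ennreal (1/2) *
     (\<integral>\<^sup>+ s \<in> {0..1}. ennreal ((norm (h1d u s))^2) \<partial>lborel) *
     (\<integral>\<^sup>+ s \<in> {0..1}. (if u s = 0 then \<infinity> else ennreal (h - Vb \<beta> (u s))) \<partial>lborel)"

end

theory Submission
  imports Defs
begin

(* Everything rests on M(u) >= (h/2) * int |u'|^2, which holds because h - V >= h.
   A path in H^k either collides with the origin or winds around it, so starting on the
   line Im z = -L it must reach the real axis; by Cauchy-Schwarz int |u'|^2 >= L^2, which
   gives the lower bound, and together with the boundedness of D also coercivity.

   For lower semicontinuity, weak H^1 convergence of paths in the bounded region D is first
   upgraded to pointwise convergence. Testing against the ramps s -> min(s,t) e shows that
   d_n + K d_n -> 0 pointwise for d_n = (u_n - u).e, where K = min_kernel is the integral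
   operator with kernel min(s,t); the estimate |K d| <= int s|d| <= 2 int s|d + K d| then forces d_n -> 0.
   Now int |u'|^2 is weakly lower semicontinuous as a squared Hilbert norm, and
   int (h - V(u)) is lower semicontinuous by Fatou's lemma, h - V being continuous with
   values in [0, infinity]. *)

section \<open>Functions with vanishing indefinite integrals\<close>

lemma sigma_finite_measure_completion:
  assumes "sigma_finite_measure M"
  shows "sigma_finite_measure (completion M)"
proof
  obtain A where "countable A" "A \<subseteq> sets M" "\<Union>A = space M" "\<forall>a\<in>A. emeasure M a \<noteq> \<infinity>"
    using sigma_finite_measure.sigma_finite_countable[OF assms] by blast
  then show "\<exists>A. countable A \<and> A \<subseteq> sets (completion M) \<and> \<Union>A = space (completion M) \<and>
      (\<forall>a\<in>A. emeasure (completion M) a \<noteq> \<infinity>)"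
    by (intro exI[of _ A]) auto
qed

lemma set_integral_borel_eq_0_if_Ioi:
  fixes F :: "real \<Rightarrow> 'b::{banach, second_countable_topology}"
  assumes F: "integrable lebesgue F" and total: "(LINT x|lebesgue. F x) = 0"
    and Ioi: "\<And>c. (LINT x:{c<..}|lebesgue. F x) = 0"
    and A: "A \<in> sets borel"
  shows "(LINT x:A|lebesgue. F x) = 0"
proof -
  have Int_stable: "Int_stable (range greaterThan :: real set set)"
  proof (rule Int_stableI_image)
    fix c d :: real
    show "\<exists>e\<in>UNIV. {c<..} \<inter> {d<..} = {e<..}" by (rule bexI[of _ "max c d"]) auto
  qed
  have sets_lebesgue: "B \<in> sets lebesgue" if "B \<in> sigma_sets UNIV (range greaterThan)" for B :: "real set"
  proof -
    have "B \<in> sets lborel" using that by (simp add: borel_Ioi)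
    then show ?thesis by simp
  qed
  have "A \<in> sigma_sets UNIV (range greaterThan)"
    using A by (simp add: borel_Ioi)
  then show ?thesis
  proof (rule sigma_sets_induct_disjoint[OF Int_stable, rotated])
    fix B :: "real set" assume "B \<in> range greaterThan"
    then show "(LINT x:B|lebesgue. F x) = 0" using Ioi by auto
  next
    show "(LINT x:{}|lebesgue. F x) = 0" by (simp add: set_lebesgue_integral_def)
  next
    fix B :: "real set"
    assume B: "B \<in> sigma_sets UNIV (range greaterThan)" and IH: "(LINT x:B|lebesgue. F x) = 0"
    have "(LINT x:UNIV - B|lebesgue. F x) = (LINT x|lebesgue. F x - indicator B x *\<^sub>R F x)"
      unfolding set_lebesgue_integral_def
      by (rule Bochner_Integration.integral_cong) (auto simp: indicator_def)
    also have "\<dots> = (LINT x|lebesgue. F x) - (LINT x:B|lebesgue. F x)"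
      unfolding set_lebesgue_integral_def
      by (rule Bochner_Integration.integral_diff[OF F integrable_mult_indicator[OF sets_lebesgue[OF B] F]])
    finally show "(LINT x:UNIV - B|lebesgue. F x) = 0" using total IH by simp
  next
    fix B :: "nat \<Rightarrow> real set"
    assume "disjoint_family B" and B: "range B \<subseteq> sigma_sets UNIV (range greaterThan)"
      and IH: "\<And>i. (LINT x:B i|lebesgue. F x) = 0"
    have "B i \<in> sets lebesgue" for i
      using B sets_lebesgue by auto
    then have "(LINT x:(\<Union>i. B i)|lebesgue. F x) = (\<Sum>i. (LINT x:B i|lebesgue. F x))"
      using \<open>disjoint_family B\<close> integrable_mult_indicator[OF _ F]
      by (intro lebesgue_integral_countable_add) (auto simp: disjoint_family_on_def set_integrable_def)
    then show "(LINT x:(\<Union>i. B i)|lebesgue. F x) = 0" using IH by simp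
  qed auto
qed

lemma AE_eq_0_if_set_integrals_Ioi_eq_0:
  fixes F :: "real \<Rightarrow> 'b::{banach, second_countable_topology}"
  assumes F: "integrable lebesgue F" and total: "(LINT x|lebesgue. F x) = 0"
    and Ioi: "\<And>c. (LINT x:{c<..}|lebesgue. F x) = 0"
  shows "AE x in lebesgue. F x = 0"
proof (rule sigma_finite_measure.density_unique_banach
    [OF sigma_finite_measure_completion[OF sigma_finite_lborel] F integrable_zero])
  fix A :: "real set" assume A: "A \<in> sets lebesgue"
  \<comment> \<open>a Lebesgue set is a Borel set up to a null set\<close>
  have "AE x in lebesgue. indicator A x = (indicator (main_part lborel A) x :: real)"
    using AE_completion[OF AE_notin_null_part[OF A]]
  proof eventually_elim
    case (elim x)
    then show ?case
      using main_part_null_part_Un[OF A] by (auto simp: indicator_def)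
  qed
  then have "(LINT x:A|lebesgue. F x) = (LINT x:main_part lborel A|lebesgue. F x)"
    unfolding set_lebesgue_integral_def using A
    by (intro integral_cong_AE) (auto intro!: borel_measurable_integrable integrable_mult_indicator F)
  also have "\<dots> = 0"
    using main_part_sets[OF A] by (intro set_integral_borel_eq_0_if_Ioi[OF F total Ioi]) simp
  finally show "(LINT x:A|lebesgue. F x) = (LINT x:A|lebesgue. 0)"
    by (simp add: set_lebesgue_integral_def)
qed

lemma AE_eq_0_if_indefinite_integrals_eq_0:
  fixes f :: "real \<Rightarrow> 'b::euclidean_space"
  assumes f: "f absolutely_integrable_on {a..b}"
    and zero: "\<And>x. x \<in> {a..b} \<Longrightarrow> integral {a..x} f = 0"
  shows "AE x in lborel. x \<in> {a..b} \<longrightarrow> f x = 0"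
proof (cases "a \<le> b")
  case ab: True
  define F where "F x = indicator {a..b} x *\<^sub>R f x" for x
  have F: "integrable lebesgue F"
    using f unfolding set_integrable_def F_def by simp
  have Ioi: "(LINT x:{c<..}|lebesgue. F x) = 0" for c
  proof -
    define m where "m = max a (min b c)"
    have m: "m \<in> {a..b}" using ab by (auto simp: m_def)
    have "(LINT x:{c<..}|lebesgue. F x) = (LINT x:{c<..} \<inter> {a..b}|lebesgue. f x)"
      unfolding set_lebesgue_integral_def F_def
      by (rule Bochner_Integration.integral_cong) (auto simp: indicator_def)
    also have "\<dots> = integral ({c<..} \<inter> {a..b}) f"
      by (rule set_lebesgue_integral_eq_integral(2), rule set_integrable_subset[OF f]) auto
    also have "\<dots> = integral {m..b} f"
      by (rule integral_spike_set; rule negligible_subset[of "{m}"]) (auto simp: m_def)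
    also have "\<dots> = integral {a..b} f - integral {a..m} f"
      using Henstock_Kurzweil_Integration.integral_combine[of a m b f] m
        set_lebesgue_integral_eq_integral(1)[OF f] by (simp add: algebra_simps)
    also have "\<dots> = 0"
      using zero[of b] zero[OF m] ab by simp
    finally show ?thesis .
  qed
  moreover have "(LINT x|lebesgue. F x) = (LINT x:{a - 1<..}|lebesgue. F x)"
    unfolding set_lebesgue_integral_def F_def
    by (rule Bochner_Integration.integral_cong) (auto simp: indicator_def)
  ultimately have "AE x in lebesgue. F x = 0"
    using AE_eq_0_if_set_integrals_Ioi_eq_0[OF F] by simp
  then have "AE x in lborel. F x = 0"
    by (simp add: AE_completion_iff)
  then show ?thesis
    by eventually_elim (auto simp: F_def)
qed simp

lemma integral_cong_AE_lborel:
  assumes "AE x in lborel. x \<in> S \<longrightarrow> f x = g x"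
  shows "integral S f = integral S g"
  using has_integral_AE[OF assms] unfolding integral_def integrable_on_def by simp

section \<open>Sobolev functions on the unit interval\<close>

lemma
  assumes "weak_deriv u g"
  shows weak_deriv_absolutely_integrable: "g absolutely_integrable_on {0..1}"
    and weak_deriv_square_integrable: "(\<lambda>s. (norm (g s))^2) integrable_on {0..1}"
    and weak_deriv_integral: "\<And>t. t \<in> {0..1} \<Longrightarrow> u t = u 0 + integral {0..t} g"
  using assms unfolding weak_deriv_def by blast+

lemma weak_deriv_integrable: "weak_deriv u g \<Longrightarrow> g integrable_on {0..1}"
  by (rule set_lebesgue_integral_eq_integral(1)[OF weak_deriv_absolutely_integrable])

lemma weak_deriv_integrable_subinterval:
  assumes "weak_deriv u g" "0 \<le> a" "b \<le> 1"
  shows "g integrable_on {a..b}"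
  using weak_deriv_integrable[OF assms(1)] by (rule integrable_on_subinterval) (use assms in auto)

lemma weak_deriv_unique:
  assumes p: "weak_deriv u p" and q: "weak_deriv u q"
  shows "AE x in lborel. x \<in> {0..1} \<longrightarrow> p x = q x"
proof -
  have "AE x in lborel. x \<in> {0..1} \<longrightarrow> p x - q x = 0"
  proof (rule AE_eq_0_if_indefinite_integrals_eq_0)
    show "(\<lambda>x. p x - q x) absolutely_integrable_on {0..1}"
      using weak_deriv_absolutely_integrable[OF p] weak_deriv_absolutely_integrable[OF q]
      by (rule set_integral_diff(1))
    fix s :: real assume s: "s \<in> {0..1}"
    have "integral {0..s} (\<lambda>x. p x - q x) = integral {0..s} p - integral {0..s} q"
      using weak_deriv_integrable_subinterval[OF p] weak_deriv_integrable_subinterval[OF q] s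
      by (intro integral_diff) auto
    then show "integral {0..s} (\<lambda>x. p x - q x) = 0"
      using weak_deriv_integral[OF p s] weak_deriv_integral[OF q s] by simp
  qed
  then show ?thesis by eventually_elim simp
qed

lemma H1_weak_deriv_h1d:
  assumes "H1 u"
  shows "weak_deriv u (h1d u)"
  using assms unfolding H1_def h1d_def by (rule someI_ex[of "weak_deriv u"])

lemma weak_deriv_continuous_on:
  assumes "weak_deriv u g"
  shows "continuous_on {0..1} u"
proof (rule continuous_on_eq)
  show "continuous_on {0..1} (\<lambda>t. u 0 + integral {0..t} g)"
    using weak_deriv_integrable[OF assms] by (intro continuous_intros indefinite_integral_continuous_1)
qed (rule sym, rule weak_deriv_integral[OF assms])

lemma H1_continuous_on: "H1 u \<Longrightarrow> continuous_on {0..1} u"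
  by (rule weak_deriv_continuous_on[OF H1_weak_deriv_h1d])

lemma power2_integral_le_integral_power2:
  fixes f :: "real \<Rightarrow> real"
  assumes f: "f integrable_on {0..1}" and f2: "(\<lambda>x. (f x)^2) integrable_on {0..1}"
  shows "(integral {0..1} f)^2 \<le> integral {0..1} (\<lambda>x. (f x)^2)"
proof -
  define c where "c = integral {0..1} f"
  have cf: "(\<lambda>x. 2 * c * f x) integrable_on {0..1}"
    using integrable_on_cmult_left[OF f, of "2 * c"] by simp
  have "0 \<le> integral {0..1} (\<lambda>x. (f x)^2 - 2 * c * f x + c^2)"
  proof (rule integral_nonneg)
    show "(\<lambda>x. (f x)^2 - 2 * c * f x + c^2) integrable_on {0..1}"
      using f2 cf by (intro integrable_add integrable_diff) auto
    show "0 \<le> (f x)^2 - 2 * c * f x + c^2" for x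
      using zero_le_power2[of "f x - c"] by (simp add: power2_diff algebra_simps)
  qed
  also have "\<dots> = integral {0..1} (\<lambda>x. (f x)^2 - 2 * c * f x) + c^2"
    using f2 cf by (subst integral_add) (auto intro: integrable_diff)
  also have "integral {0..1} (\<lambda>x. (f x)^2 - 2 * c * f x) = integral {0..1} (\<lambda>x. (f x)^2) - 2 * c * c"
    using f2 cf by (subst integral_diff) (auto simp: c_def)
  finally show ?thesis
    unfolding c_def[symmetric] by (simp add: power2_eq_square)
qed

lemma weak_deriv_dist_le:
  assumes g: "weak_deriv u g" and s: "s \<in> {0..1}"
  shows "(norm (u s - u 0))^2 \<le> integral {0..1} (\<lambda>x. (norm (g x))^2)"
proof -
  have ng: "(\<lambda>x. norm (g x)) integrable_on {0..1}"
    using weak_deriv_absolutely_integrable[OF g] by (simp add: absolutely_integrable_on_def)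
  have "norm (u s - u 0) = norm (integral {0..s} g)"
    using weak_deriv_integral[OF g s] by simp
  also have "\<dots> \<le> integral {0..s} (\<lambda>x. norm (g x))"
    using weak_deriv_integrable_subinterval[OF g, of 0 s] integrable_on_subinterval[OF ng, of 0 s] s
    by (intro integral_norm_bound_integral) auto
  also have "\<dots> \<le> integral {0..1} (\<lambda>x. norm (g x))"
    using s ng integrable_on_subinterval[OF ng, of 0 s] by (intro integral_subset_le) auto
  finally have "(norm (u s - u 0))^2 \<le> (integral {0..1} (\<lambda>x. norm (g x)))^2"
    by (intro power_mono) auto
  also have "\<dots> \<le> integral {0..1} (\<lambda>x. (norm (g x))^2)"
    using power2_integral_le_integral_power2[OF ng weak_deriv_square_integrable[OF g]] by simp
  finally show ?thesis .
qed

definition dirichlet_integral :: "(real \<Rightarrow> complex) \<Rightarrow> real" where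
  "dirichlet_integral u = integral {0..1} (\<lambda>s. (norm (h1d u s))^2)"

lemma dirichlet_integral_nonneg:
  assumes "H1 u"
  shows "0 \<le> dirichlet_integral u"
  unfolding dirichlet_integral_def
  by (rule integral_nonneg[OF weak_deriv_square_integrable[OF H1_weak_deriv_h1d[OF assms]]]) simp

lemma dirichlet_integral_inner: "dirichlet_integral u = integral {0..1} (\<lambda>s. h1d u s \<bullet> h1d u s)"
  unfolding dirichlet_integral_def by (simp add: power2_norm_eq_inner)

lemma nn_integral_eq_dirichlet_integral:
  assumes "H1 u"
  shows "(\<integral>\<^sup>+ s \<in> {0..1}. ennreal ((norm (h1d u s))^2) \<partial>lborel) = ennreal (dirichlet_integral u)"
proof -
  have "(\<integral>\<^sup>+ s \<in> {0..1}. ennreal ((norm (h1d u s))^2) \<partial>lborel)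
      = (\<integral>\<^sup>+ s. ennreal (indicator {0..1} s * (norm (h1d u s))^2) \<partial>lborel)"
    by (rule nn_integral_cong) (auto simp: indicator_def)
  also have "\<dots> = ennreal (dirichlet_integral u)"
    unfolding dirichlet_integral_def
    by (rule nn_integral_has_integral_lebesgue)
      (use weak_deriv_square_integrable[OF H1_weak_deriv_h1d[OF assms]] in auto)
  finally show ?thesis .
qed

lemma dirichlet_integral_ge_dist:
  assumes "H1 u" "s \<in> {0..1}"
  shows "(norm (u s - u 0))^2 \<le> dirichlet_integral u"
  unfolding dirichlet_integral_def by (rule weak_deriv_dist_le[OF H1_weak_deriv_h1d[OF assms(1)] assms(2)])

lemma H1_inner_self_le:
  assumes u: "H1 u" and R: "\<And>s. s \<in> {0..1} \<Longrightarrow> norm (u s) \<le> R"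
  shows "H1_inner u u \<le> R^2 + dirichlet_integral u"
proof -
  have "integral {0..1} (\<lambda>s. u s \<bullet> u s) \<le> integral {0..1} (\<lambda>s::real. R^2)"
  proof (rule integral_le)
    show "(\<lambda>s. u s \<bullet> u s) integrable_on {0..1}"
      by (intro integrable_continuous_real continuous_intros H1_continuous_on u)
    fix s :: real assume "s \<in> {0..1}"
    then show "u s \<bullet> u s \<le> R^2"
      using R by (simp add: power2_norm_eq_inner[symmetric] power_mono)
  qed (rule integrable_const_ivl)
  then show ?thesis unfolding H1_inner_def dirichlet_integral_inner by simp
qed

lemma inner_integrable_on_if_square_integrable:
  fixes f g :: "'a::euclidean_space \<Rightarrow> 'b::euclidean_space"
  assumes f: "f absolutely_integrable_on S" "(\<lambda>s. (norm (f s))^2) integrable_on S"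
    and g: "g absolutely_integrable_on S" "(\<lambda>s. (norm (g s))^2) integrable_on S"
    and S: "S \<in> sets lebesgue"
  shows "(\<lambda>s. f s \<bullet> g s) integrable_on S"
proof (rule measurable_bounded_by_integrable_imp_integrable)
  show "(\<lambda>s. f s \<bullet> g s) \<in> borel_measurable (lebesgue_on S)"
    using f(1) g(1) absolutely_integrable_measurable[OF S] by (auto intro: borel_measurable_inner)
  show "(\<lambda>s. ((norm (f s))^2 + (norm (g s))^2) / 2) integrable_on S"
    using integrable_add[OF f(2) g(2)] by (rule integrable_on_divide)
  fix s
  have "norm (f s \<bullet> g s) \<le> norm (f s) * norm (g s)"
    using Cauchy_Schwarz_ineq2 by simp
  also have "\<dots> \<le> ((norm (f s))^2 + (norm (g s))^2) / 2"
    using zero_le_power2[of "norm (f s) - norm (g s)"] by (simp add: power2_eq_square algebra_simps)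
  finally show "norm (f s \<bullet> g s) \<le> ((norm (f s))^2 + (norm (g s))^2) / 2" .
qed (rule S)

lemma H1_deriv_inner_integrable:
  assumes "H1 u" "H1 v"
  shows "(\<lambda>s. h1d u s \<bullet> h1d v s) integrable_on {0..1}"
  using H1_weak_deriv_h1d[OF assms(1)] H1_weak_deriv_h1d[OF assms(2)]
  by (intro inner_integrable_on_if_square_integrable weak_deriv_absolutely_integrable
      weak_deriv_square_integrable) auto

section \<open>Weak convergence implies pointwise convergence\<close>

definition ramp :: "complex \<Rightarrow> real \<Rightarrow> real \<Rightarrow> complex" where
  "ramp e t s = min s t *\<^sub>R e"

lemma integrable_on_cut_off_const:
  fixes c :: "'b::euclidean_space" and t :: real
  assumes "t \<le> 1"
  shows "(\<lambda>s. if s \<in> {0..t} then c else 0) integrable_on {0..1}"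
proof -
  have "{0..t} \<inter> {0..1} = {0..min t 1}" by auto
  then have "(\<lambda>s. c) integrable_on ({0..t} \<inter> {0..1})"
    by (simp only: integrable_const_ivl)
  then show ?thesis
    unfolding integrable_on_def by (subst has_integral_restrict_Int) blast
qed

lemma weak_deriv_ramp:
  assumes t: "t \<in> {0..1}"
  shows "weak_deriv (ramp e t) (\<lambda>s. if s \<in> {0..t} then e else 0)"
  unfolding weak_deriv_def
proof (intro conjI ballI)
  have "(\<lambda>s. norm (if s \<in> {0..t} then e else 0)) = (\<lambda>s. if s \<in> {0..t} then norm e else 0)"
    "(\<lambda>s. (norm (if s \<in> {0..t} then e else 0))^2) = (\<lambda>s. if s \<in> {0..t} then (norm e)^2 else 0)"
    by auto
  then show "(\<lambda>s. if s \<in> {0..t} then e else 0) absolutely_integrable_on {0..1}"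
    and "(\<lambda>s. (norm (if s \<in> {0..t} then e else 0))^2) integrable_on {0..1}"
    unfolding absolutely_integrable_on_def
    using t integrable_on_cut_off_const[of t e] integrable_on_cut_off_const[of t "norm e"]
      integrable_on_cut_off_const[of t "(norm e)^2"] by simp_all
  fix s :: real assume s: "s \<in> {0..1}"
  have "integral {0..s} (\<lambda>s. if s \<in> {0..t} then e else 0) = integral ({0..t} \<inter> {0..s}) (\<lambda>_. e)"
    by (rule integral_restrict_Int)
  also have "{0..t} \<inter> {0..s} = {0..min s t}" by auto
  finally show "ramp e t s = ramp e t 0 + integral {0..s} (\<lambda>s. if s \<in> {0..t} then e else 0)"
    using t s by (simp add: ramp_def)
qed

lemma H1_ramp: "t \<in> {0..1} \<Longrightarrow> H1 (ramp e t)"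
  unfolding H1_def using weak_deriv_ramp by blast

lemma H1_inner_ramp:
  assumes w: "H1 w" and t: "t \<in> {0..1}"
  shows "H1_inner w (ramp e t) = integral {0..1} (\<lambda>s. min s t * (w s \<bullet> e)) + (w t - w 0) \<bullet> e"
proof -
  have "AE s in lborel. s \<in> {0..1} \<longrightarrow> h1d (ramp e t) s = (if s \<in> {0..t} then e else 0)"
    by (rule weak_deriv_unique[OF H1_weak_deriv_h1d[OF H1_ramp[OF t]] weak_deriv_ramp[OF t]])
  then have "AE s in lborel. s \<in> {0..1} \<longrightarrow>
      h1d w s \<bullet> h1d (ramp e t) s = (if s \<in> {0..t} then h1d w s \<bullet> e else 0)"
    by eventually_elim auto
  then have "integral {0..1} (\<lambda>s. h1d w s \<bullet> h1d (ramp e t) s)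
      = integral {0..1} (\<lambda>s. if s \<in> {0..t} then h1d w s \<bullet> e else 0)"
    by (rule integral_cong_AE_lborel)
  also have "\<dots> = integral ({0..t} \<inter> {0..1}) (\<lambda>s. h1d w s \<bullet> e)"
    by (rule integral_restrict_Int)
  also have "{0..t} \<inter> {0..1} = {0..t}" using t by auto
  also have "integral {0..t} (\<lambda>s. h1d w s \<bullet> e) = integral {0..t} (h1d w) \<bullet> e"
    using integral_linear[OF weak_deriv_integrable_subinterval[OF H1_weak_deriv_h1d[OF w], of 0 t]
        bounded_linear_inner_left[of e]] t
    by (simp add: o_def)
  also have "integral {0..t} (h1d w) = w t - w 0"
    using weak_deriv_integral[OF H1_weak_deriv_h1d[OF w] t] by simp
  finally show ?thesis
    unfolding H1_inner_def ramp_def by (simp add: inner_scaleR_right)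
qed

definition min_kernel :: "(real \<Rightarrow> real) \<Rightarrow> real \<Rightarrow> real" where
  "min_kernel d t = integral {0..1} (\<lambda>s. min s t * d s)"

lemma abs_min_kernel_le:
  assumes d: "continuous_on {0..1} d" and t: "t \<in> {0..1}"
  shows "\<bar>min_kernel d t\<bar> \<le> integral {0..1} (\<lambda>s. s * \<bar>d s\<bar>)"
proof -
  have "norm (integral {0..1} (\<lambda>s. min s t * d s)) \<le> integral {0..1} (\<lambda>s. s * \<bar>d s\<bar>)"
  proof (rule integral_norm_bound_integral)
    show "(\<lambda>s. min s t * d s) integrable_on {0..1}" "(\<lambda>s. s * \<bar>d s\<bar>) integrable_on {0..1}"
      by (intro integrable_continuous_real continuous_intros d)+
    fix s :: real assume "s \<in> {0..1}"
    then show "norm (min s t * d s) \<le> s * \<bar>d s\<bar>"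
      using t by (simp add: abs_mult mult_right_mono)
  qed
  then show ?thesis by (simp add: min_kernel_def)
qed

lemma continuous_on_min_kernel:
  assumes d: "continuous_on {0..1} d"
  shows "continuous_on {0..1} (min_kernel d)"
proof -
  obtain K where "\<forall>x\<in>d ` {0..1}. norm x \<le> K"
    using compact_imp_bounded[OF compact_continuous_image[OF d compact_Icc]]
    unfolding bounded_iff by blast
  then have K: "\<And>s. s \<in> {0..1} \<Longrightarrow> \<bar>d s\<bar> \<le> K" by simp
  have "0 \<le> K" using K[of 0] by simp
  have "dist (min_kernel d x) (min_kernel d y) \<le> K * dist x y" for x y
  proof -
    have "min_kernel d x - min_kernel d y = integral {0..1} (\<lambda>s. (min s x - min s y) * d s)"
      unfolding min_kernel_def left_diff_distrib
      by (intro integral_diff[symmetric] integrable_continuous_real continuous_intros d)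
    also have "norm \<dots> \<le> integral {0..1} (\<lambda>s::real. \<bar>x - y\<bar> * K)"
    proof (rule integral_norm_bound_integral)
      show "(\<lambda>s. (min s x - min s y) * d s) integrable_on {0..1}"
        by (intro integrable_continuous_real continuous_intros d)
      fix s :: real assume "s \<in> {0..1}"
      moreover have "\<bar>min s x - min s y\<bar> \<le> \<bar>x - y\<bar>" by (auto simp: min_def)
      ultimately show "norm ((min s x - min s y) * d s) \<le> \<bar>x - y\<bar> * K"
        using K by (simp add: abs_mult mult_mono)
    qed (rule integrable_const_ivl)
    finally show ?thesis by (simp add: dist_real_def mult.commute)
  qed
  then have "K-lipschitz_on {0..1} (min_kernel d)"
    using \<open>0 \<le> K\<close> by (intro lipschitz_onI)
  then show ?thesis
    by (rule lipschitz_on_continuous_on)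
qed

lemma weighted_integral_le_min_kernel:
  assumes d: "continuous_on {0..1} d"
  shows "integral {0..1} (\<lambda>s. s * \<bar>d s\<bar>) \<le> 2 * integral {0..1} (\<lambda>s. s * \<bar>d s + min_kernel d s\<bar>)"
proof -
  define c where "c = integral {0..1} (\<lambda>s. s * \<bar>d s\<bar>)"
  have cont: "continuous_on {0..1} (\<lambda>s. d s + min_kernel d s)"
    by (intro continuous_intros d continuous_on_min_kernel)
  have "integral {0..1} (\<lambda>s. s * \<bar>d s\<bar>) \<le> integral {0..1} (\<lambda>s. s * \<bar>d s + min_kernel d s\<bar> + s * c)"
  proof (rule integral_le)
    fix s :: real assume s: "s \<in> {0..1}"
    have "\<bar>d s\<bar> \<le> \<bar>d s + min_kernel d s\<bar> + c"
      using abs_min_kernel_le[OF d s] unfolding c_def by linarith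
    then show "s * \<bar>d s\<bar> \<le> s * \<bar>d s + min_kernel d s\<bar> + s * c"
      using s mult_left_mono by (fastforce simp: algebra_simps)
  qed (intro integrable_continuous_real continuous_intros d cont)+
  then have "c \<le> integral {0..1} (\<lambda>s. s * \<bar>d s + min_kernel d s\<bar> + s * c)"
    by (simp only: c_def)
  also have "\<dots> = integral {0..1} (\<lambda>s. s * \<bar>d s + min_kernel d s\<bar>) + c / 2"
    by (subst integral_add) (auto intro!: integrable_continuous_real continuous_intros cont)
  finally show ?thesis unfolding c_def by simp
qed

lemma weighted_integral_tendsto_zero_if_min_kernel_tendsto_zero:
  assumes cont: "\<And>n. continuous_on {0..1} (d n)"
    and bnd: "\<And>n s. s \<in> {0..1} \<Longrightarrow> \<bar>d n s\<bar> \<le> K"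
    and conv: "\<And>s. s \<in> {0..1} \<Longrightarrow> (\<lambda>n. d n s + min_kernel (d n) s) \<longlonglongrightarrow> 0"
  shows "(\<lambda>n. integral {0..1} (\<lambda>s. s * \<bar>d n s\<bar>)) \<longlonglongrightarrow> 0"
proof -
  define E where "E n s = d n s + min_kernel (d n) s" for n s
  have weighted_le: "integral {0..1} (\<lambda>s. s * \<bar>d n s\<bar>) \<le> K" for n
  proof -
    have "integral {0..1} (\<lambda>s. s * \<bar>d n s\<bar>) \<le> integral {0..1} (\<lambda>s::real. K)"
    proof (rule integral_le)
      fix s :: real assume "s \<in> {0..1}"
      then show "s * \<bar>d n s\<bar> \<le> K"
        using bnd[of s n] mult_mono[of s 1 "\<bar>d n s\<bar>" K] by simp
    qed (intro integrable_continuous_real continuous_intros cont integrable_const_ivl)+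
    then show ?thesis by simp
  qed
  have E_bound: "norm (s * \<bar>E n s\<bar>) \<le> 2 * K" if s: "s \<in> {0..1}" for n s
  proof -
    have "\<bar>E n s\<bar> \<le> 2 * K"
      using abs_min_kernel_le[OF cont s, of n] weighted_le[of n] bnd[OF s, of n]
      unfolding E_def by linarith
    then show ?thesis
      using s mult_mono[of s 1 "\<bar>E n s\<bar>" "2 * K"] by simp
  qed
  have "(\<lambda>n. integral {0..1} (\<lambda>s. s * \<bar>E n s\<bar>)) \<longlonglongrightarrow> integral {0..1} (\<lambda>s::real. 0::real)"
  proof (rule dominated_convergence(2)[of _ _ "\<lambda>s. 2 * K"])
    show "(\<lambda>s. s * \<bar>E n s\<bar>) integrable_on {0..1}" for n
      unfolding E_def by (intro integrable_continuous_real continuous_intros cont continuous_on_min_kernel)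
    fix s :: real assume "s \<in> {0..1}"
    then show "(\<lambda>n. s * \<bar>E n s\<bar>) \<longlonglongrightarrow> 0"
      using tendsto_mult_right_zero[OF tendsto_rabs_zero[OF conv]] unfolding E_def by blast
  qed (use E_bound in auto)
  then have lim: "(\<lambda>n. 2 * integral {0..1} (\<lambda>s. s * \<bar>E n s\<bar>)) \<longlonglongrightarrow> 0"
    by (simp add: tendsto_mult_left_zero)
  have "\<forall>n. 0 \<le> integral {0..1} (\<lambda>s. s * \<bar>d n s\<bar>)"
    by (intro allI integral_nonneg integrable_continuous_real continuous_intros cont) auto
  moreover have "\<forall>n. integral {0..1} (\<lambda>s. s * \<bar>d n s\<bar>) \<le> 2 * integral {0..1} (\<lambda>s. s * \<bar>E n s\<bar>)"
    using weighted_integral_le_min_kernel[OF cont] unfolding E_def by blast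
  ultimately show ?thesis
    by (rule tendsto_sandwich[OF always_eventually always_eventually tendsto_const lim])
qed

lemma tendsto_zero_if_min_kernel_tendsto_zero:
  assumes cont: "\<And>n. continuous_on {0..1} (d n)"
    and bnd: "\<And>n s. s \<in> {0..1} \<Longrightarrow> \<bar>d n s\<bar> \<le> K"
    and conv: "\<And>s. s \<in> {0..1} \<Longrightarrow> (\<lambda>n. d n s + min_kernel (d n) s) \<longlonglongrightarrow> 0"
    and t: "t \<in> {0..1}"
  shows "(\<lambda>n. d n t) \<longlonglongrightarrow> 0"
proof (rule Lim_null_comparison[OF always_eventually])
  show "\<forall>n. norm (d n t) \<le> \<bar>d n t + min_kernel (d n) t\<bar> + integral {0..1} (\<lambda>s. s * \<bar>d n s\<bar>)"
    using abs_min_kernel_le[OF cont t] unfolding real_norm_def by (smt (verit))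
  show "(\<lambda>n. \<bar>d n t + min_kernel (d n) t\<bar> + integral {0..1} (\<lambda>s. s * \<bar>d n s\<bar>)) \<longlonglongrightarrow> 0"
    using tendsto_add_zero[OF tendsto_rabs_zero[OF conv[OF t]]
        weighted_integral_tendsto_zero_if_min_kernel_tendsto_zero[OF cont bnd conv]] .
qed

lemma H1_inner_ramp_diff:
  assumes v: "H1 v" and w: "H1 w" and start: "v 0 = w 0" and t: "t \<in> {0..1}"
  shows "H1_inner v (ramp e t) - H1_inner w (ramp e t)
    = (v t - w t) \<bullet> e + min_kernel (\<lambda>s. (v s - w s) \<bullet> e) t"
proof -
  have int: "(\<lambda>s. min s t * (x s \<bullet> e)) integrable_on {0..1}" if "H1 x" for x
    by (intro integrable_continuous_real continuous_intros H1_continuous_on that)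
  have "min_kernel (\<lambda>s. (v s - w s) \<bullet> e) t
      = integral {0..1} (\<lambda>s. min s t * (v s \<bullet> e)) - integral {0..1} (\<lambda>s. min s t * (w s \<bullet> e))"
    unfolding min_kernel_def inner_diff_left right_diff_distrib
    by (rule integral_diff[OF int[OF v] int[OF w]])
  then show ?thesis
    unfolding H1_inner_ramp[OF v t] H1_inner_ramp[OF w t] using start by (simp add: inner_diff_left)
qed

lemma weak_conv_H1_tendsto:
  assumes wc: "weak_conv_H1 us u"
    and bnd: "\<And>n s. s \<in> {0..1} \<Longrightarrow> norm (us n s) \<le> R" "\<And>s. s \<in> {0..1} \<Longrightarrow> norm (u s) \<le> R"
    and start: "\<And>n. us n 0 = u 0"
    and t: "t \<in> {0..1}"
  shows "(\<lambda>n. us n t) \<longlonglongrightarrow> u t"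
proof -
  have Hu: "H1 u" and Hus: "\<And>n. H1 (us n)"
    and lim: "\<And>v. H1 v \<Longrightarrow> (\<lambda>n. H1_inner (us n) v) \<longlonglongrightarrow> H1_inner u v"
    using wc unfolding weak_conv_H1_def by auto
  have component: "(\<lambda>n. (us n t - u t) \<bullet> e) \<longlonglongrightarrow> 0" if e: "norm e = 1" for e
  proof (rule tendsto_zero_if_min_kernel_tendsto_zero[where K = "2 * R"])
    show "continuous_on {0..1} (\<lambda>s. (us n s - u s) \<bullet> e)" for n
      by (intro continuous_intros H1_continuous_on Hu Hus)
    show "\<bar>(us n s - u s) \<bullet> e\<bar> \<le> 2 * R" if s: "s \<in> {0..1}" for n s
    proof -
      have "\<bar>(us n s - u s) \<bullet> e\<bar> \<le> norm (us n s - u s)"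
        using Cauchy_Schwarz_ineq2[of "us n s - u s" e] e by simp
      also have "\<dots> \<le> norm (us n s) + norm (u s)"
        by (rule norm_triangle_ineq4)
      finally show ?thesis
        using bnd(1)[OF s, of n] bnd(2)[OF s] by linarith
    qed
    fix s :: real assume s: "s \<in> {0..1}"
    show "(\<lambda>n. (us n s - u s) \<bullet> e + min_kernel (\<lambda>s'. (us n s' - u s') \<bullet> e) s) \<longlonglongrightarrow> 0"
      using LIM_zero[OF lim[OF H1_ramp[OF s, of e]]]
      unfolding H1_inner_ramp_diff[OF Hus Hu start s] .
  qed (rule t)
  have "(\<lambda>n. us n t - u t) \<longlonglongrightarrow> 0"
    using component[of 1] component[of \<i>] unfolding tendsto_complex_iff
    by (simp add: complex_inner_1_right complex_inner_i_right)
  then show ?thesis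
    by (rule LIM_zero_cancel)
qed

section \<open>Lower bound, lower semicontinuity and coercivity of the Maupertuis functional\<close>

lemma dirichlet_integral_ge_linearization:
  assumes v: "H1 v" and w: "H1 w"
  shows "2 * integral {0..1} (\<lambda>s. h1d v s \<bullet> h1d w s) - dirichlet_integral w \<le> dirichlet_integral v"
proof -
  have vw: "(\<lambda>s. h1d v s \<bullet> h1d w s) integrable_on {0..1}"
    and ww: "(\<lambda>s. h1d w s \<bullet> h1d w s) integrable_on {0..1}"
    and vv: "(\<lambda>s. h1d v s \<bullet> h1d v s) integrable_on {0..1}"
    using v w by (simp_all add: H1_deriv_inner_integrable)
  have "2 * integral {0..1} (\<lambda>s. h1d v s \<bullet> h1d w s) - dirichlet_integral w
      = integral {0..1} (\<lambda>s. 2 * (h1d v s \<bullet> h1d w s) - h1d w s \<bullet> h1d w s)"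
    unfolding dirichlet_integral_inner using vw ww
    by (subst integral_diff) (auto simp: integral_mult_right)
  also have "\<dots> \<le> integral {0..1} (\<lambda>s. h1d v s \<bullet> h1d v s)"
  proof (rule integral_le)
    show "(\<lambda>s. 2 * (h1d v s \<bullet> h1d w s) - h1d w s \<bullet> h1d w s) integrable_on {0..1}"
      using integrable_on_cmult_left[OF vw, of 2] ww by (intro integrable_diff) simp_all
    fix s :: real
    have "0 \<le> (h1d v s - h1d w s) \<bullet> (h1d v s - h1d w s)" by simp
    then show "2 * (h1d v s \<bullet> h1d w s) - h1d w s \<bullet> h1d w s \<le> h1d v s \<bullet> h1d v s"
      by (simp add: inner_diff_left inner_diff_right inner_commute)
  qed (rule vv)
  finally show ?thesis
    unfolding dirichlet_integral_inner .
qed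

lemma ennreal_le_liminf_if_tendsto_lower_bound:
  fixes f g :: "nat \<Rightarrow> real"
  assumes "g \<longlonglongrightarrow> a" and "\<And>n. g n \<le> f n"
  shows "ennreal a \<le> liminf (\<lambda>n. ennreal (f n))"
proof -
  have "ennreal a = liminf (\<lambda>n. ennreal (g n))"
    using tendsto_ennrealI[OF assms(1)] by (simp add: lim_imp_Liminf)
  also have "\<dots> \<le> liminf (\<lambda>n. ennreal (f n))"
    using assms(2) by (intro Liminf_mono always_eventually allI ennreal_leI)
  finally show ?thesis .
qed

lemma dirichlet_integral_weak_lsc:
  assumes wc: "weak_conv_H1 us u"
    and bnd: "\<And>n s. s \<in> {0..1} \<Longrightarrow> norm (us n s) \<le> R" "\<And>s. s \<in> {0..1} \<Longrightarrow> norm (u s) \<le> R"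
    and start: "\<And>n. us n 0 = u 0"
  shows "ennreal (dirichlet_integral u) \<le> liminf (\<lambda>n. ennreal (dirichlet_integral (us n)))"
proof -
  have Hu: "H1 u" and Hus: "\<And>n. H1 (us n)"
    and lim: "\<And>v. H1 v \<Longrightarrow> (\<lambda>n. H1_inner (us n) v) \<longlonglongrightarrow> H1_inner u v"
    using wc unfolding weak_conv_H1_def by auto
  have "(\<lambda>n. integral {0..1} (\<lambda>s. us n s \<bullet> u s)) \<longlonglongrightarrow> integral {0..1} (\<lambda>s. u s \<bullet> u s)"
  proof (rule dominated_convergence(2)[of _ _ "\<lambda>s. R * R"])
    show "(\<lambda>s. us n s \<bullet> u s) integrable_on {0..1}" for n
      by (intro integrable_continuous_real continuous_intros H1_continuous_on Hus Hu)
    show "norm (us n s \<bullet> u s) \<le> R * R" if s: "s \<in> {0..1}" for n s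
      using Cauchy_Schwarz_ineq2[of "us n s" "u s"] bnd(1)[OF s, of n] bnd(2)[OF s]
        mult_mono[of "norm (us n s)" R "norm (u s)" R] by simp
    show "(\<lambda>n. us n s \<bullet> u s) \<longlonglongrightarrow> u s \<bullet> u s" if "s \<in> {0..1}" for s
      by (intro tendsto_inner tendsto_const weak_conv_H1_tendsto[OF wc bnd start that])
  qed (rule integrable_const_ivl)
  then have "(\<lambda>n. H1_inner (us n) u - integral {0..1} (\<lambda>s. us n s \<bullet> u s)) \<longlonglongrightarrow>
      H1_inner u u - integral {0..1} (\<lambda>s. u s \<bullet> u s)"
    by (intro tendsto_diff lim Hu)
  then have "(\<lambda>n. 2 * integral {0..1} (\<lambda>s. h1d (us n) s \<bullet> h1d u s) - dirichlet_integral u)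
      \<longlonglongrightarrow> 2 * dirichlet_integral u - dirichlet_integral u"
    unfolding H1_inner_def dirichlet_integral_inner by (intro tendsto_intros) simp
  then have lower: "(\<lambda>n. 2 * integral {0..1} (\<lambda>s. h1d (us n) s \<bullet> h1d u s) - dirichlet_integral u)
      \<longlonglongrightarrow> dirichlet_integral u"
    by simp
  show ?thesis
    by (rule ennreal_le_liminf_if_tendsto_lower_bound[OF lower dirichlet_integral_ge_linearization[OF Hus Hu]])
qed

definition jacobi_factor :: "real \<Rightarrow> real \<Rightarrow> complex \<Rightarrow> ennreal" where
  "jacobi_factor h \<beta> z = (if z = 0 then \<infinity> else ennreal (h - Vb \<beta> z))"

lemma Mfun_eq:
  assumes "H1 u"
  shows "Mfun h \<beta> u = ennreal (1/2) * ennreal (dirichlet_integral u) *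
    (\<integral>\<^sup>+ s \<in> {0..1}. jacobi_factor h \<beta> (u s) \<partial>lborel)"
  unfolding Mfun_def jacobi_factor_def nn_integral_eq_dirichlet_integral[OF assms] ..

lemma Vb_nonpos:
  assumes "0 \<le> \<beta>"
  shows "Vb \<beta> z \<le> 0"
proof -
  have "0 \<le> 1 / cmod z" "0 \<le> \<beta> / (cmod z)^2"
    using assms by auto
  then show ?thesis
    unfolding Vb_def by linarith
qed

lemma jacobi_factor_ge: "0 \<le> \<beta> \<Longrightarrow> ennreal h \<le> jacobi_factor h \<beta> z"
  unfolding jacobi_factor_def using Vb_nonpos[of \<beta> z] by (auto intro!: ennreal_leI)

lemma borel_measurable_jacobi_factor: "jacobi_factor h \<beta> \<in> borel_measurable borel"
  unfolding jacobi_factor_def Vb_def by measurable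

lemma inverse_norm_le_h_minus_Vb:
  assumes "0 \<le> h" and "0 \<le> \<beta>" and "z \<noteq> 0"
  shows "1 / norm z \<le> h - Vb \<beta> z"
  using assms unfolding Vb_def by simp

lemma tendsto_jacobi_factor_collision:
  assumes z: "(z \<longlongrightarrow> 0) F" and h: "0 \<le> h" and \<beta>: "0 \<le> \<beta>"
  shows "((\<lambda>x. jacobi_factor h \<beta> (z x)) \<longlongrightarrow> \<infinity>) F"
proof (rule order_tendstoI)
  fix a :: ennreal assume "a < \<infinity>"
  then obtain r where r: "0 \<le> r" "a = ennreal r"
    by (cases a) auto
  have "((\<lambda>x. norm (z x)) \<longlongrightarrow> 0) F"
    using z by (simp add: tendsto_norm_zero_iff)
  then have "eventually (\<lambda>x. norm (z x) < 1 / (r + 1)) F"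
    by (rule order_tendstoD(2)) (use r in simp)
  then show "eventually (\<lambda>x. a < jacobi_factor h \<beta> (z x)) F"
  proof eventually_elim
    case (elim x)
    show ?case
    proof (cases "z x = 0")
      case False
      then have "r + 1 < 1 / norm (z x)"
        using elim r by (simp add: field_simps)
      also have "\<dots> \<le> h - Vb \<beta> (z x)"
        using inverse_norm_le_h_minus_Vb[OF h \<beta> False] .
      finally show ?thesis
        using False r by (simp add: jacobi_factor_def ennreal_lessI)
    qed (simp add: jacobi_factor_def r)
  qed
qed simp

lemma tendsto_jacobi_factor:
  assumes z: "(z \<longlongrightarrow> z0) F" and h: "0 \<le> h" and \<beta>: "0 \<le> \<beta>"
  shows "((\<lambda>x. jacobi_factor h \<beta> (z x)) \<longlongrightarrow> jacobi_factor h \<beta> z0) F"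
proof (cases "z0 = 0")
  case False
  have "((\<lambda>x. ennreal (h - Vb \<beta> (z x))) \<longlongrightarrow> ennreal (h - Vb \<beta> z0)) F"
    unfolding Vb_def using False by (intro tendsto_intros z) auto
  moreover have "eventually (\<lambda>x. z x \<noteq> 0) F"
    using z False by (rule tendsto_imp_eventually_ne)
  ultimately show ?thesis
    using False unfolding jacobi_factor_def
    by (auto elim!: Lim_transform_eventually eventually_mono)
next
  case True
  then show ?thesis
    using tendsto_jacobi_factor_collision[OF _ h \<beta>] z by (simp add: jacobi_factor_def)
qed

lemma nn_integral_jacobi_factor_ge:
  fixes u :: "real \<Rightarrow> complex"
  assumes "0 \<le> \<beta>"
  shows "ennreal h \<le> (\<integral>\<^sup>+ s \<in> {0..1}. jacobi_factor h \<beta> (u s) \<partial>lborel)"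
proof -
  have "ennreal h = (\<integral>\<^sup>+ (s::real) \<in> {0..1}. ennreal h \<partial>lborel)"
    by (simp add: nn_integral_cmult_indicator)
  also have "\<dots> \<le> (\<integral>\<^sup>+ s \<in> {0..1}. jacobi_factor h \<beta> (u s) \<partial>lborel)"
    by (intro nn_integral_mono) (auto simp: indicator_def jacobi_factor_ge[OF assms])
  finally show ?thesis .
qed

lemma nn_integral_jacobi_factor_lsc:
  fixes us :: "nat \<Rightarrow> real \<Rightarrow> complex"
  assumes cont: "\<And>n. continuous_on {0..1} (us n)"
    and lim: "\<And>s. s \<in> {0..1} \<Longrightarrow> (\<lambda>n. us n s) \<longlonglongrightarrow> u s"
    and h: "0 \<le> h" and \<beta>: "0 \<le> \<beta>"
  shows "(\<integral>\<^sup>+ s \<in> {0..1}. jacobi_factor h \<beta> (u s) \<partial>lborel)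
    \<le> liminf (\<lambda>n. \<integral>\<^sup>+ s \<in> {0..1}. jacobi_factor h \<beta> (us n s) \<partial>lborel)"
proof -
  have meas: "(\<lambda>s. jacobi_factor h \<beta> (us n s) * indicator {0..1} s) \<in> borel_measurable lborel" for n
  proof -
    have "(\<lambda>s. indicator {0..1} s *\<^sub>R us n s) \<in> borel_measurable borel"
      by (rule borel_measurable_continuous_on_indicator[OF _ cont]) simp
    then have "(\<lambda>s. jacobi_factor h \<beta> (indicator {0..1} s *\<^sub>R us n s) * indicator {0..1} s)
        \<in> borel_measurable borel"
      using borel_measurable_jacobi_factor by measurable
    also have "(\<lambda>s. jacobi_factor h \<beta> (indicator {0..1} s *\<^sub>R us n s) * indicator {0..1} s)
        = (\<lambda>s. jacobi_factor h \<beta> (us n s) * indicator {0..1} s)"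
      by (auto simp: indicator_def)
    finally show ?thesis by simp
  qed
  have "(\<integral>\<^sup>+ s \<in> {0..1}. jacobi_factor h \<beta> (u s) \<partial>lborel)
      \<le> (\<integral>\<^sup>+ s. liminf (\<lambda>n. jacobi_factor h \<beta> (us n s) * indicator {0..1} s) \<partial>lborel)"
  proof (intro nn_integral_mono)
    fix s :: real
    show "jacobi_factor h \<beta> (u s) * indicator {0..1} s
        \<le> liminf (\<lambda>n. jacobi_factor h \<beta> (us n s) * indicator {0..1} s)"
    proof (cases "s \<in> {0..1}")
      case True
      then have "liminf (\<lambda>n. jacobi_factor h \<beta> (us n s)) = jacobi_factor h \<beta> (u s)"
        by (intro lim_imp_Liminf tendsto_jacobi_factor lim h \<beta>) simp_all
      then show ?thesis using True by simp
    qed simp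
  qed
  also have "\<dots> \<le> liminf (\<lambda>n. \<integral>\<^sup>+ s. jacobi_factor h \<beta> (us n s) * indicator {0..1} s \<partial>lborel)"
    by (rule nn_integral_liminf[OF meas])
  finally show ?thesis .
qed

lemma liminf_mult_ennreal:
  fixes a b :: "nat \<Rightarrow> ennreal"
  shows "liminf a * liminf b \<le> liminf (\<lambda>n. a n * b n)"
proof -
  define A where "A n = (INF l\<in>{n..}. a l)" for n
  define B where "B n = (INF l\<in>{n..}. b l)" for n
  have "mono A" "mono B"
    unfolding A_def B_def mono_def by (auto intro!: INF_mono)
  have "liminf a * liminf b = (SUP i. SUP j. A i * B j)"
    unfolding liminf_SUP_INF A_def B_def
    by (simp add: SUP_mult_left_ennreal SUP_mult_right_ennreal, rule SUP_commute)
  also have "\<dots> \<le> (SUP n. INF l\<in>{n..}. a l * b l)"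
  proof (intro SUP_least)
    fix i j :: nat
    have "A i * B j \<le> A (max i j) * B (max i j)"
      using \<open>mono A\<close> \<open>mono B\<close> by (intro mult_mono) (auto simp: mono_def)
    also have "\<dots> \<le> (INF l\<in>{max i j..}. a l * b l)"
      unfolding A_def B_def by (intro INF_greatest mult_mono INF_lower) auto
    also have "\<dots> \<le> (SUP n. INF l\<in>{n..}. a l * b l)"
      by (rule SUP_upper) simp
    finally show "A i * B j \<le> (SUP n. INF l\<in>{n..}. a l * b l)" .
  qed
  also have "\<dots> = liminf (\<lambda>n. a n * b n)"
    unfolding liminf_SUP_INF ..
  finally show ?thesis .
qed

lemma Mfun_ge_dirichlet_integral:
  assumes u: "H1 u" and h: "0 \<le> h" and \<beta>: "0 \<le> \<beta>"
  shows "ennreal (dirichlet_integral u * h / 2) \<le> Mfun h \<beta> u"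
proof -
  have D: "0 \<le> dirichlet_integral u"
    by (rule dirichlet_integral_nonneg[OF u])
  have "ennreal (dirichlet_integral u * h / 2) = ennreal (1/2 * dirichlet_integral u) * ennreal h"
    using D h by (subst ennreal_mult[symmetric]) simp_all
  also have "\<dots> = ennreal (1/2) * ennreal (dirichlet_integral u) * ennreal h"
    using D by (subst ennreal_mult) simp_all
  also have "\<dots> \<le> ennreal (1/2) * ennreal (dirichlet_integral u) *
      (\<integral>\<^sup>+ s \<in> {0..1}. jacobi_factor h \<beta> (u s) \<partial>lborel)"
    by (intro mult_left_mono nn_integral_jacobi_factor_ge \<beta>) simp
  also have "\<dots> = Mfun h \<beta> u"
    by (rule Mfun_eq[OF u, symmetric])
  finally show ?thesis .
qed

lemma Mfun_weak_lsc:
  assumes wc: "weak_conv_H1 us u"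
    and bnd: "\<And>n s. s \<in> {0..1} \<Longrightarrow> norm (us n s) \<le> R" "\<And>s. s \<in> {0..1} \<Longrightarrow> norm (u s) \<le> R"
    and start: "\<And>n. us n 0 = u 0"
    and h: "0 \<le> h" and \<beta>: "0 \<le> \<beta>"
  shows "Mfun h \<beta> u \<le> liminf (\<lambda>n. Mfun h \<beta> (us n))"
proof -
  have Hu: "H1 u" and Hus: "\<And>n. H1 (us n)"
    using wc unfolding weak_conv_H1_def by auto
  define a where "a n = ennreal (1/2) * ennreal (dirichlet_integral (us n))" for n
  define b where "b n = (\<integral>\<^sup>+ s \<in> {0..1}. jacobi_factor h \<beta> (us n s) \<partial>lborel)" for n
  have "Mfun h \<beta> u = ennreal (1/2) * ennreal (dirichlet_integral u) *
      (\<integral>\<^sup>+ s \<in> {0..1}. jacobi_factor h \<beta> (u s) \<partial>lborel)"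
    by (rule Mfun_eq[OF Hu])
  also have "\<dots> \<le> ennreal (1/2) * liminf (\<lambda>n. ennreal (dirichlet_integral (us n))) * liminf b"
    unfolding b_def
    by (intro mult_mono dirichlet_integral_weak_lsc[OF wc bnd start] order_refl
        nn_integral_jacobi_factor_lsc[OF H1_continuous_on[OF Hus] weak_conv_H1_tendsto[OF wc bnd start] h \<beta>])
      auto
  also have "ennreal (1/2) * liminf (\<lambda>n. ennreal (dirichlet_integral (us n))) \<le> liminf a"
    using liminf_mult_ennreal[of "\<lambda>_. ennreal (1/2)"] unfolding a_def by (simp add: Liminf_const)
  also have "liminf a * liminf b \<le> liminf (\<lambda>n. a n * b n)"
    by (rule liminf_mult_ennreal)
  also have "(\<lambda>n. a n * b n) = (\<lambda>n. Mfun h \<beta> (us n))"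
    unfolding a_def b_def using Mfun_eq[OF Hus] by simp
  finally show ?thesis
    by (simp add: mult_right_mono)
qed

lemma H1_norm_le:
  assumes u: "H1 u" and R: "\<And>s. s \<in> {0..1} \<Longrightarrow> norm (u s) \<le> R"
  shows "H1_norm u \<le> sqrt (R^2 + dirichlet_integral u)"
  unfolding H1_norm_def using H1_inner_self_le[OF u R] by (rule real_sqrt_le_mono)

lemma Mfun_coercive:
  assumes h: "0 < h" and \<beta>: "0 \<le> \<beta>"
  shows "\<exists>\<rho>. \<forall>u. H1 u \<longrightarrow> (\<forall>s\<in>{0..1}. norm (u s) \<le> R) \<longrightarrow> \<rho> \<le> H1_norm u \<longrightarrow>
    ennreal B \<le> Mfun h \<beta> u"
proof (intro exI[of _ "sqrt (R^2 + max 0 (2 * B / h)) + 1"] allI impI)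
  fix u assume u: "H1 u" and R: "\<forall>s\<in>{0..1}. norm (u s) \<le> R"
    and large: "sqrt (R^2 + max 0 (2 * B / h)) + 1 \<le> H1_norm u"
  have "H1_norm u \<le> sqrt (R^2 + dirichlet_integral u)"
    using H1_norm_le[OF u] R by blast
  then have "sqrt (R^2 + max 0 (2 * B / h)) < sqrt (R^2 + dirichlet_integral u)"
    using large by linarith
  then have "2 * B / h \<le> dirichlet_integral u"
    by (simp add: real_sqrt_less_iff)
  then have "B \<le> dirichlet_integral u * h / 2"
    using h by (simp add: field_simps)
  then have "ennreal B \<le> ennreal (dirichlet_integral u * h / 2)"
    by (rule ennreal_leI)
  also have "\<dots> \<le> Mfun h \<beta> u"
    using u h \<beta> by (intro Mfun_ge_dirichlet_integral) auto
  finally show "ennreal B \<le> Mfun h \<beta> u" .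
qed

section \<open>Paths in the region D\<close>

lemma Ind_eq_0_if_below_real_axis:
  assumes u: "continuous_on {0..1} u" and below: "\<forall>s\<in>{0..1}. Im (u s) < 0"
  shows "Ind u = 0"
  unfolding Ind_def
proof (rule winding_number_zero_outside[OF _ convex_halfspace_lt[of \<i> 0]])
  have "path u"
    using u by (simp add: path_def)
  then show "path (u +++ linepath (u 1) (u 0))"
    by (intro path_join_imp) (simp_all add: pathfinish_def)
  show "pathfinish (u +++ linepath (u 1) (u 0)) = pathstart (u +++ linepath (u 1) (u 0))"
    by (simp add: pathstart_def pathfinish_def joinpaths_def linepath_def)
  have "path_image u \<subseteq> {z. \<i> \<bullet> z < 0}"
    using below by (auto simp: path_image_def complex_inner_i_left)
  moreover have "path_image (linepath (u 1) (u 0)) \<subseteq> {z. \<i> \<bullet> z < 0}"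
    unfolding path_image_linepath using below
    by (intro closed_segment_subset convex_halfspace_lt) (auto simp: complex_inner_i_left)
  ultimately show "path_image (u +++ linepath (u 1) (u 0)) \<subseteq> {z. \<i> \<bullet> z < 0}"
    using path_image_join_subset by blast
qed simp

lemma
  assumes "u \<in> Hk D z0 z1 k"
  shows Hk_H1: "H1 u" and Hk_in_D: "\<And>s. s \<in> {0..1} \<Longrightarrow> u s \<in> D" and Hk_start: "u 0 = z0"
  using assms unfolding Hk_def Hhat_def Coll_def by auto

lemma Hk_reaches_real_axis:
  assumes u: "u \<in> Hk D z0 z1 k" and k: "k \<noteq> 0"
  shows "\<exists>s\<in>{0..1}. 0 \<le> Im (u s)"
proof (cases "u \<in> Coll D z0 z1")
  case True
  then obtain s where "s \<in> {0..1}" "u s = 0"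
    unfolding Coll_def by blast
  then show ?thesis by (intro bexI[of _ s]) simp_all
next
  case False
  then have "Ind u = of_int k"
    using u unfolding Hk_def Hhat_def by auto
  then have "Ind u \<noteq> 0"
    using k by simp
  then show ?thesis
    using Ind_eq_0_if_below_real_axis[OF H1_continuous_on[OF Hk_H1[OF u]]] by (meson not_le)
qed

lemma dirichlet_integral_Hk_ge:
  assumes u: "u \<in> Hk D z0 z1 k" and k: "k \<noteq> 0" and z0: "Im z0 = - L" and L: "0 \<le> L"
  shows "L^2 \<le> dirichlet_integral u"
proof -
  obtain s where s: "s \<in> {0..1}" "0 \<le> Im (u s)"
    using Hk_reaches_real_axis[OF u k] by blast
  have "L \<le> \<bar>Im (u s - u 0)\<bar>"
    using s Hk_start[OF u] z0 by simp
  also have "\<dots> \<le> norm (u s - u 0)"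
    by (rule abs_Im_le_cmod)
  finally have "L^2 \<le> (norm (u s - u 0))^2"
    using L by (intro power_mono)
  also have "\<dots> \<le> dirichlet_integral u"
    by (rule dirichlet_integral_ge_dist[OF Hk_H1[OF u] s(1)])
  finally show ?thesis .
qed

lemma Mfun_Hk_ge:
  assumes u: "u \<in> Hk D z0 z1 k" and k: "k \<noteq> 0" and z0: "Im z0 = - L" and L: "0 \<le> L"
    and h: "0 \<le> h" and \<beta>: "0 \<le> \<beta>"
  shows "ennreal (L^2 * h / 2) \<le> Mfun h \<beta> u"
proof -
  have "ennreal (L^2 * h / 2) \<le> ennreal (dirichlet_integral u * h / 2)"
    using dirichlet_integral_Hk_ge[OF u k z0 L] h by (intro ennreal_leI) (simp add: mult_right_mono)
  also have "\<dots> \<le> Mfun h \<beta> u"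
    by (rule Mfun_ge_dirichlet_integral[OF Hk_H1[OF u] h \<beta>])
  finally show ?thesis .
qed

lemma Im_eq_if_in_closed_segment:
  assumes "z \<in> closed_segment a b" and "Im a = c" and "Im b = c"
  shows "Im z = c"
proof -
  obtain t where t: "z = (1 - t) *\<^sub>R a + t *\<^sub>R b"
    using assms(1) unfolding closed_segment_def by auto
  show ?thesis
    unfolding t using assms(2,3) by (simp add: algebra_simps)
qed

lemma bounded_regionD:
  assumes Z: "continuous_on {t0..t1} Z" and t: "t0 \<le> t1"
  shows "bounded (regionD Z t0 t1)"
proof -
  have "path_image (\<lambda>s. Z (t0 + s * (t1 - t0))) \<subseteq> Z ` {t0..t1}"
  proof (clarsimp simp: path_image_def)
    fix s :: real assume "0 \<le> s" "s \<le> 1"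
    then have "t0 + s * (t1 - t0) \<in> {t0..t1}"
      using t mult_left_le_one_le[of "t1 - t0" s] by auto
    then show "Z (t0 + s * (t1 - t0)) \<in> Z ` {t0..t1}" by blast
  qed
  then have "bounded (path_image (\<lambda>s. Z (t0 + s * (t1 - t0))))"
    using compact_imp_bounded[OF compact_continuous_image[OF Z compact_Icc]] bounded_subset by blast
  then have "bounded (path_image (orbit_loop Z t0 t1))"
    unfolding orbit_loop_def
    using path_image_join_subset bounded_subset bounded_Un compact_imp_bounded[OF compact_segment]
    by (metis path_image_linepath)
  then show ?thesis
    unfolding regionD_def by (intro bounded_Un[THEN iffD2] conjI bounded_inside)
qed

theorem proposition2p7:
  fixes L h \<beta> t0 t1 :: real and Z Z' :: "real \<Rightarrow> complex"
    and D :: "complex set" and l' :: "complex set"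
  assumes "L > 0" "h > 0" "\<beta> > 0" "t0 < t1"
    and sol: "\<forall>t\<in>{t0..t1}. Z t \<noteq> 0 \<and> (Z has_vector_derivative Z' t) (at t) \<and>
               (Z' has_vector_derivative - gradVb \<beta> (Z t)) (at t) \<and>
               (1/2) * (norm (Z' t))^2 + Vb \<beta> (Z t) = h"
    and "Im (Z t0) = - L" and "Im (Z t1) = - L"
    and "\<forall>t\<in>{t0<..<t1}. Im (Z t) > - L"
    and "Ind (\<lambda>s. Z (t0 + s * (t1 - t0))) = 1"
    and "vangle (Z' t0) 1 < pi / 2"
    and "vangle (-1) (Z' t1) > pi / 2"
    and "D = regionD Z t0 t1"
    and "l' = closed_segment (Z t0) (Z t1)"
  shows "\<forall>k::int. k \<noteq> 0 \<longrightarrow>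
     (\<exists>C>0. \<forall>z0\<in>l'. \<forall>z1\<in>l'. \<forall>u\<in>Hk D z0 z1 k. ennreal C \<le> Mfun h \<beta> u) \<and>
     (\<forall>z0\<in>l'. \<forall>z1\<in>l'.
        (\<forall>us u. (\<forall>n. us n \<in> Hk D z0 z1 k) \<longrightarrow> u \<in> Hk D z0 z1 k \<longrightarrow> weak_conv_H1 us u \<longrightarrow>
           Mfun h \<beta> u \<le> liminf (\<lambda>n. Mfun h \<beta> (us n))) \<and>
        (\<forall>B::real. \<exists>R. \<forall>u\<in>Hk D z0 z1 k. R \<le> H1_norm u \<longrightarrow> ennreal B \<le> Mfun h \<beta> u))"
proof -
  have "continuous_on {t0..t1} Z"
    using sol by (intro continuous_at_imp_continuous_on) (auto intro: has_vector_derivative_continuous)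
  then obtain RD where RD: "\<And>z. z \<in> D \<Longrightarrow> norm z \<le> RD"
    using bounded_regionD assms(4,12) unfolding bounded_iff by (metis less_imp_le)
  have bounded: "norm (u s) \<le> RD" if "u \<in> Hk D z0 z1 k" "s \<in> {0..1}" for u z0 z1 k s
    using RD Hk_in_D[OF that] by blast
  have "ennreal (L^2 * h / 2) \<le> Mfun h \<beta> u" if "k \<noteq> 0" "z0 \<in> l'" "u \<in> Hk D z0 z1 k" for k z0 z1 u
    using Mfun_Hk_ge[OF that(3,1) Im_eq_if_in_closed_segment] that(2) assms by auto
  moreover have "Mfun h \<beta> u \<le> liminf (\<lambda>n. Mfun h \<beta> (us n))"
    if "\<forall>n. us n \<in> Hk D z0 z1 k" "u \<in> Hk D z0 z1 k" "weak_conv_H1 us u" for z0 z1 k us u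
    using that assms(2,3) Hk_start[of _ D z0 z1 k]
    by (intro Mfun_weak_lsc[where R = RD] bounded) auto
  moreover have "\<exists>\<rho>. \<forall>u\<in>Hk D z0 z1 k. \<rho> \<le> H1_norm u \<longrightarrow> ennreal B \<le> Mfun h \<beta> u" for z0 z1 k B
    using Mfun_coercive[of h \<beta> RD B] assms(2,3) bounded Hk_H1 by (meson less_imp_le)
  moreover have "0 < L^2 * h / 2"
    using assms(1,2) by simp
  ultimately show ?thesis
    by blast
qed

end
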